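(* Let $G$ be a connected graph. The following are equivalent: (1) $G$ is a tree; (2) any two $\mathbb{T}$-gain graphs on $G$ are $\mathbb{T}$-cospectral; (3) the adjacency matrices of any two $\mathbb{T}$-gain graphs on $G$ have the same spectral radius.
   Context: Graphs are finite, simple and undirected. $\mathbb{T}=\{z\in\mathbb{C}:|z|=1\}$. A $\mathbb{T}$-gain on $G$ is a map $\varphi$ from oriented edges $\overrightarrow{e_{st}}$ of $G$ to $\mathbb{T}$ with $\varphi(\overrightarrow{e_{ts}})=\varphi(\overrightarrow{e_{st}})^{-1}$; $\Phi=(G,\varphi)$ is a $\mathbb{T}$-gain graph, and its adjacency matrix $A(\Phi)$ is the Hermitian matrix with $(s,t)$ entry $\varphi(\overrightarrow{e_{st}})$ if $v_s\sim v_t$, else $0$. $\mathbb{T}$-cospectral means the adjacency matrices have the same spectrum. *)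

theory Defs
  imports "Jordan_Normal_Form.Spectral_Radius"
begin

definition simple_graph :: "nat \<Rightarrow> (nat \<Rightarrow> nat \<Rightarrow> bool) \<Rightarrow> bool" where
  "simple_graph n E \<longleftrightarrow> (\<forall>s t. E s t \<longrightarrow> s < n \<and> t < n \<and> s \<noteq> t \<and> E t s)"

definition graph_connected :: "nat \<Rightarrow> (nat \<Rightarrow> nat \<Rightarrow> bool) \<Rightarrow> bool" where
  "graph_connected n E \<longleftrightarrow> (\<forall>s<n. \<forall>t<n. (s, t) \<in> {(a, b). E a b}\<^sup>*)"

definition has_cycle :: "(nat \<Rightarrow> nat \<Rightarrow> bool) \<Rightarrow> bool" where
  "has_cycle E \<longleftrightarrow> (\<exists>vs. length vs \<ge> 3 \<and> distinct vs \<and>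
      (\<forall>i. Suc i < length vs \<longrightarrow> E (vs ! i) (vs ! Suc i)) \<and> E (last vs) (hd vs))"

definition is_tree :: "nat \<Rightarrow> (nat \<Rightarrow> nat \<Rightarrow> bool) \<Rightarrow> bool" where
  "is_tree n E \<longleftrightarrow> graph_connected n E \<and> \<not> has_cycle E"

text \<open>A T-gain on G: phi s t is the gain of the oriented edge from s to t.\<close>
definition T_gain :: "(nat \<Rightarrow> nat \<Rightarrow> bool) \<Rightarrow> (nat \<Rightarrow> nat \<Rightarrow> complex) \<Rightarrow> bool" where
  "T_gain E \<phi> \<longleftrightarrow> (\<forall>s t. E s t \<longrightarrow> cmod (\<phi> s t) = 1 \<and> \<phi> t s = inverse (\<phi> s t))"

definition gain_adj :: "nat \<Rightarrow> (nat \<Rightarrow> nat \<Rightarrow> bool) \<Rightarrow> (nat \<Rightarrow> nat \<Rightarrow> complex) \<Rightarrow> complex mat" where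
  "gain_adj n E \<phi> = mat n n (\<lambda>(s, t). if E s t then \<phi> s t else 0)"

definition cospectral :: "complex mat \<Rightarrow> complex mat \<Rightarrow> bool" where
  "cospectral A B \<longleftrightarrow> (\<forall>a. order a (char_poly A) = order a (char_poly B))"

end

theory Submission
  imports Defs
begin

(* On a tree every T-gain phi is balanced, phi(s,t) = theta(s) * cnj(theta(t)) for some
   unit-valued theta: deleting an edge of a forest separates its two ends, so a potential for
   the smaller graph can be rotated on one side to fit the deleted edge as well. Hence the
   gain adjacency matrices of a tree are all diagonally similar, cospectral, and have the same
   spectral radius.

   Conversely, on a cycle of length m put the gain i on one edge and 1 elsewhere. Suppose its
   spectral radius equals the spectral radius r of the adjacency matrix A, and let x be an
   eigenvector for an eigenvalue of modulus r. The moduli y = |x| satisfy r y <= A y entrywise.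
   Since A is real symmetric, z.Az <= r z.z for every z, so y maximizes the Rayleigh quotient
   and A y = r y; by connectivity y > 0. Equality in all the triangle inequalities then aligns
   the phases u = x/|x|: psi(s,t) u(t) = mu u(s) on every edge, with mu^2 = 1. Going round the
   cycle gives i = mu^m, which is impossible. *)

lemma gain_adj_carrier [simp]: "gain_adj n E \<phi> \<in> carrier_mat n n"
  unfolding gain_adj_def by simp

lemma gain_adj_dim [simp]: "dim_row (gain_adj n E \<phi>) = n" "dim_col (gain_adj n E \<phi>) = n"
  unfolding gain_adj_def by simp_all

lemma gain_adj_index [simp]:
  "i < n \<Longrightarrow> j < n \<Longrightarrow> gain_adj n E \<phi> $$ (i, j) = (if E i j then \<phi> i j else 0)"
  unfolding gain_adj_def by simp

lemma similar_mat_imp_cospectral: "similar_mat A B \<Longrightarrow> cospectral A B"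
  unfolding cospectral_def by (simp add: char_poly_similar)

lemma cospectral_imp_spectrum_eq:
  assumes A: "A \<in> carrier_mat n n" and B: "B \<in> carrier_mat n n" and "cospectral A B"
  shows "spectrum A = spectrum B"
proof -
  have "char_poly A \<noteq> 0" "char_poly B \<noteq> 0"
    using degree_monic_char_poly[OF A] degree_monic_char_poly[OF B] by auto
  then have "poly (char_poly A) a = 0 \<longleftrightarrow> poly (char_poly B) a = 0" for a
    using \<open>cospectral A B\<close> unfolding cospectral_def by (metis order_root)
  then show ?thesis
    unfolding spectrum_root_char_poly[OF A] spectrum_root_char_poly[OF B] by simp
qed

lemma cospectral_imp_spectral_radius_eq:
  "A \<in> carrier_mat n n \<Longrightarrow> B \<in> carrier_mat n n \<Longrightarrow> cospectral A B
    \<Longrightarrow> spectral_radius A = spectral_radius B"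
  unfolding spectral_radius_def by (simp add: cospectral_imp_spectrum_eq)

lemma unit_mult_cnj: "cmod z = 1 \<Longrightarrow> z * cnj z = 1"
  by (metis complex_norm_square mult.commute of_real_1 power_one)

lemma unit_inverse_eq_cnj: "cmod z = 1 \<Longrightarrow> inverse z = cnj z"
  using unit_mult_cnj inverse_unique by blast

lemma T_gainD:
  assumes "T_gain E \<phi>" "E s t"
  shows "cmod (\<phi> s t) = 1" "\<phi> t s = cnj (\<phi> s t)"
  using assms unit_inverse_eq_cnj unfolding T_gain_def by auto

lemma T_gain_mult_cnj:
  assumes "T_gain E \<phi>" "T_gain E \<psi>"
  shows "T_gain E (\<lambda>s t. \<phi> s t * cnj (\<psi> s t))"
  unfolding T_gain_def using T_gainD[OF assms(1)] T_gainD[OF assms(2)]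
  by (simp add: norm_mult unit_inverse_eq_cnj)

section \<open>Balanced gains on forests\<close>

lemma rtrancl_imp_distinct_path:
  assumes "(v, u) \<in> {(a, b). R a b}\<^sup>*"
  shows "\<exists>vs. vs \<noteq> [] \<and> hd vs = v \<and> last vs = u \<and> distinct vs \<and>
           (\<forall>i. Suc i < length vs \<longrightarrow> R (vs ! i) (vs ! Suc i))"
  using assms
proof (induction rule: converse_rtrancl_induct)
  case base
  show ?case by (intro exI[of _ "[u]"]) auto
next
  case (step v w)
  then obtain vs where vs: "vs \<noteq> []" "hd vs = w" "last vs = u" "distinct vs"
    and R_vs: "\<forall>i. Suc i < length vs \<longrightarrow> R (vs ! i) (vs ! Suc i)"
    by blast
  have "R v w" using step(1) by simp
  show ?case
  proof (cases "v \<in> set vs")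
    case False
    show ?thesis
    proof (intro exI[of _ "v # vs"] conjI allI impI)
      fix i assume "Suc i < length (v # vs)"
      then show "R ((v # vs) ! i) ((v # vs) ! Suc i)"
        using vs R_vs \<open>R v w\<close> by (cases i) (auto simp: hd_conv_nth)
    qed (use vs False in auto)
  next
    case True
    \<comment> \<open>shortcut: drop the part of the path before its visit to v\<close>
    then obtain p q where vs_split: "vs = p @ v # q" by (meson split_list)
    show ?thesis
    proof (intro exI[of _ "v # q"] conjI allI impI)
      fix i assume "Suc i < length (v # q)"
      then have "R (vs ! (length p + i)) (vs ! Suc (length p + i))"
        using R_vs vs_split by (metis add_Suc_right length_Cons length_append nat_add_left_cancel_less)
      then show "R ((v # q) ! i) ((v # q) ! Suc i)"
        unfolding vs_split by (metis add_Suc_right nth_append_length_plus)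
    qed (use vs vs_split in auto)
  qed
qed

lemma has_cycle_mono: "has_cycle E' \<Longrightarrow> (\<And>s t. E' s t \<Longrightarrow> E s t) \<Longrightarrow> has_cycle E"
  unfolding has_cycle_def by blast

lemma acyclic_edge_deletion_disconnects:
  assumes "\<not> has_cycle E" "E u v" "u \<noteq> v"
  shows "(v, u) \<notin> {(s, t). E s t \<and> {s, t} \<noteq> {u, v}}\<^sup>*"
proof
  assume "(v, u) \<in> {(s, t). E s t \<and> {s, t} \<noteq> {u, v}}\<^sup>*"
  then obtain vs where vs: "vs \<noteq> []" "hd vs = v" "last vs = u" "distinct vs"
    and path: "\<forall>i. Suc i < length vs \<longrightarrow> E (vs ! i) (vs ! Suc i) \<and> {vs ! i, vs ! Suc i} \<noteq> {u, v}"
    using rtrancl_imp_distinct_path[of v u "\<lambda>s t. E s t \<and> {s, t} \<noteq> {u, v}"] by auto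
  have "length vs \<ge> 3"
  proof (cases vs rule: remdups_adj.cases) \<comment> \<open>vs = [], [x] or x # y # ys\<close>
    case (2 x)
    then show ?thesis using vs \<open>u \<noteq> v\<close> by simp
  next
    case (3 x y ys)
    then show ?thesis using vs path[rule_format, of 0] by (cases ys) (auto simp: insert_commute)
  qed (use vs in simp)
  then have "has_cycle E"
    unfolding has_cycle_def using vs path \<open>E u v\<close> by blast
  then show False using assms(1) by simp
qed

lemma potential_rotate_on_closed_set:
  assumes \<theta>'_unit: "\<forall>s. cmod (\<theta>' s) = 1"
    and \<theta>'_pot: "\<forall>s t. E' s t \<longrightarrow> \<chi> s t = \<theta>' s * cnj (\<theta>' t)"
    and C_closed: "\<forall>s t. E' s t \<longrightarrow> (s \<in> C \<longleftrightarrow> t \<in> C)"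
    and "u \<notin> C" "v \<in> C" "cmod (\<chi> u v) = 1"
  shows "\<exists>\<theta>. (\<forall>s. cmod (\<theta> s) = 1) \<and> (\<forall>s t. E' s t \<longrightarrow> \<chi> s t = \<theta> s * cnj (\<theta> t))
           \<and> \<chi> u v = \<theta> u * cnj (\<theta> v)"
proof -
  define c where "c = cnj (\<chi> u v) * \<theta>' u * cnj (\<theta>' v)"
  define \<theta> where "\<theta> w = (if w \<in> C then c * \<theta>' w else \<theta>' w)" for w
  have "cmod c = 1" unfolding c_def using assms(6) \<theta>'_unit by (simp add: norm_mult)
  have "cmod (\<theta> s) = 1" for s
    unfolding \<theta>_def using \<theta>'_unit \<open>cmod c = 1\<close> by (simp add: norm_mult)
  moreover have "\<chi> s t = \<theta> s * cnj (\<theta> t)" if "E' s t" for s t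
    using \<theta>'_pot C_closed that unit_mult_cnj[OF \<open>cmod c = 1\<close>]
    unfolding \<theta>_def by (auto simp: mult_ac)
  moreover have "\<theta> u * cnj (\<theta> v) = \<chi> u v * (\<theta>' u * cnj (\<theta>' u)) * (\<theta>' v * cnj (\<theta>' v))"
    using \<open>u \<notin> C\<close> \<open>v \<in> C\<close> unfolding \<theta>_def c_def by (simp add: mult_ac)
  then have "\<chi> u v = \<theta> u * cnj (\<theta> v)"
    using unit_mult_cnj \<theta>'_unit by simp
  ultimately show ?thesis by blast
qed

lemma acyclic_T_gain_potential:
  assumes "finite {(s, t). E s t}" "\<forall>s t. E s t \<longrightarrow> s \<noteq> t \<and> E t s" "\<not> has_cycle E"
    and "T_gain E \<chi>"
  shows "\<exists>\<theta>. (\<forall>s. cmod (\<theta> s) = 1) \<and> (\<forall>s t. E s t \<longrightarrow> \<chi> s t = \<theta> s * cnj (\<theta> t))"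
  using assms
proof (induction "card {(s, t). E s t}" arbitrary: E rule: less_induct)
  case less
  show ?case
  proof (cases "\<exists>u v. E u v")
    case False
    then show ?thesis by (intro exI[of _ "\<lambda>_. 1"]) auto
  next
    case True
    then obtain u v where "E u v" by blast
    then have "u \<noteq> v" using less.prems(2) by auto
    define E' where "E' s t \<longleftrightarrow> E s t \<and> {s, t} \<noteq> {u, v}" for s t
    define C where "C = {w. (v, w) \<in> {(s, t). E' s t}\<^sup>*}"
    have "{(s, t). E' s t} \<subset> {(s, t). E s t}"
      using \<open>E u v\<close> unfolding E'_def by auto
    then have "card {(s, t). E' s t} < card {(s, t). E s t}"
      using less.prems(1) by (rule psubset_card_mono[rotated])
    moreover have "finite {(s, t). E' s t}"
      using less.prems(1) unfolding E'_def by (auto intro: rev_finite_subset)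
    moreover have E'_sym: "\<forall>s t. E' s t \<longrightarrow> s \<noteq> t \<and> E' t s"
      using less.prems(2) unfolding E'_def by (auto simp: insert_commute)
    moreover have "\<not> has_cycle E'"
      using less.prems(3) has_cycle_mono[of E' E] unfolding E'_def by blast
    moreover have "T_gain E' \<chi>"
      using less.prems(4) unfolding E'_def T_gain_def by blast
    ultimately obtain \<theta>' where \<theta>'_unit: "\<forall>s. cmod (\<theta>' s) = 1"
      and \<theta>'_pot: "\<forall>s t. E' s t \<longrightarrow> \<chi> s t = \<theta>' s * cnj (\<theta>' t)"
      using less.hyps by blast
    have C_closed: "\<forall>s t. E' s t \<longrightarrow> (s \<in> C \<longleftrightarrow> t \<in> C)"
      using E'_sym unfolding C_def by (auto intro: rtrancl_into_rtrancl)
    have "u \<notin> C" "v \<in> C"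
      using acyclic_edge_deletion_disconnects[OF less.prems(3) \<open>E u v\<close> \<open>u \<noteq> v\<close>]
      unfolding C_def E'_def by auto
    have \<chi>_uv: "cmod (\<chi> u v) = 1" "\<chi> v u = cnj (\<chi> u v)"
      using T_gainD[OF less.prems(4) \<open>E u v\<close>] by auto
    obtain \<theta> where \<theta>_unit: "\<forall>s. cmod (\<theta> s) = 1"
      and E'_pot: "\<forall>s t. E' s t \<longrightarrow> \<chi> s t = \<theta> s * cnj (\<theta> t)"
      and uv_pot: "\<chi> u v = \<theta> u * cnj (\<theta> v)"
      using potential_rotate_on_closed_set[OF \<theta>'_unit \<theta>'_pot C_closed \<open>u \<notin> C\<close> \<open>v \<in> C\<close> \<chi>_uv(1)]
      by blast
    have "\<chi> v u = \<theta> v * cnj (\<theta> u)"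
      using uv_pot \<chi>_uv by simp
    then have "\<chi> s t = \<theta> s * cnj (\<theta> t)" if "E s t" for s t
      using that E'_pot uv_pot unfolding E'_def by (auto simp: doubleton_eq_iff)
    with \<theta>_unit show ?thesis by blast
  qed
qed

lemma acyclic_gain_adj_similar:
  assumes "simple_graph n E" "\<not> has_cycle E" "T_gain E \<phi>" "T_gain E \<psi>"
  shows "similar_mat (gain_adj n E \<phi>) (gain_adj n E \<psi>)"
proof -
  have "finite {(s, t). E s t}"
    using assms(1) unfolding simple_graph_def
    by (auto intro: finite_subset[of _ "{..<n} \<times> {..<n}"])
  moreover have "\<forall>s t. E s t \<longrightarrow> s \<noteq> t \<and> E t s"
    using assms(1) unfolding simple_graph_def by blast
  ultimately obtain \<theta> where \<theta>_unit: "\<forall>s. cmod (\<theta> s) = 1"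
    and \<theta>_pot: "\<forall>s t. E s t \<longrightarrow> \<phi> s t * cnj (\<psi> s t) = \<theta> s * cnj (\<theta> t)"
    using acyclic_T_gain_potential[OF _ _ assms(2) T_gain_mult_cnj[OF assms(3,4)]] by blast
  let ?P = "mat_diag n \<theta>" and ?Q = "mat_diag n (\<lambda>s. cnj (\<theta> s))"
  have inverse: "?P * ?Q = 1\<^sub>m n" "?Q * ?P = 1\<^sub>m n"
    using \<theta>_unit unit_mult_cnj by (simp_all add: mult.commute)
  have conj: "gain_adj n E \<phi> = ?P * gain_adj n E \<psi> * ?Q"
  proof -
    have "\<phi> s t = \<theta> s * \<psi> s t * cnj (\<theta> t)" if "E s t" for s t
    proof -
      have "\<phi> s t = \<phi> s t * cnj (\<psi> s t) * \<psi> s t"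
        using T_gainD(1)[OF assms(4) that] unit_mult_cnj by (simp add: mult_ac)
      then show ?thesis using \<theta>_pot that by (simp add: mult_ac)
    qed
    then show ?thesis
      by (auto simp: mat_diag_mult_left[of _ n n] mat_diag_mult_right[of _ n n] intro!: eq_matI)
  qed
  show ?thesis by (rule similar_matI[where n = n, OF _ inverse conj]) simp
qed

section \<open>Rayleigh quotients of real symmetric matrices\<close>

lemma log_convex_geometric_lower_bound:
  fixes N :: "nat \<Rightarrow> real"
  assumes nonneg: "\<And>k. 0 \<le> N k"
    and log_convex: "\<And>k. N (Suc k) ^ 2 \<le> N k * N (Suc (Suc k))"
    and "0 \<le> q" and "q * N 0 \<le> N 1"
  shows "q ^ k * N 0 \<le> N k"
proof -
  have ratio: "q * N k \<le> N (Suc k)" for k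
  proof (induction k)
    case 0
    then show ?case using \<open>q * N 0 \<le> N 1\<close> by simp
  next
    case (Suc k)
    show ?case
    proof (cases "N (Suc k) = 0")
      case False
      then have "N k > 0"
        using log_convex[of k] nonneg[of k] nonneg[of "Suc k"] by (auto simp: le_less)
      have "N k * (q * N (Suc k)) \<le> N (Suc k) * N (Suc k)"
        using mult_right_mono[OF Suc.IH nonneg[of "Suc k"]] by (simp add: mult_ac)
      also have "\<dots> \<le> N k * N (Suc (Suc k))"
        using log_convex[of k] by (simp add: power2_eq_square)
      finally show ?thesis using \<open>N k > 0\<close> by simp
    qed (use nonneg in simp)
  qed
  show ?thesis
  proof (induction k)
    case (Suc k)
    have "q ^ Suc k * N 0 \<le> q * N k"
      using Suc.IH \<open>0 \<le> q\<close> by (simp add: mult.assoc mult_left_mono)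
    then show ?case using ratio[of k] by simp
  qed simp
qed

lemma scalar_prod_Cauchy_Schwarz:
  fixes u w :: "real vec"
  assumes "u \<in> carrier_vec n" "w \<in> carrier_vec n"
  shows "(u \<bullet> w)\<^sup>2 \<le> (u \<bullet> u) * (w \<bullet> w)"
proof -
  define a b where "a i = u $ i" and "b i = w $ i" for i
  \<comment> \<open>Lagrange's identity\<close>
  have "0 \<le> (\<Sum>i<n. \<Sum>j<n. (a i * b j - a j * b i)\<^sup>2)"
    by (intro sum_nonneg) auto
  also have "\<dots> = (\<Sum>i<n. \<Sum>j<n. a i * a i * (b j * b j)) + (\<Sum>i<n. \<Sum>j<n. b i * b i * (a j * a j))
      - 2 * (\<Sum>i<n. \<Sum>j<n. a i * b i * (a j * b j))"
    by (simp add: power2_eq_square algebra_simps sum.distrib sum_subtractf sum_distrib_left)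
  also have "\<dots> = 2 * ((u \<bullet> u) * (w \<bullet> w) - (u \<bullet> w)\<^sup>2)"
    using assms unfolding sum_product[symmetric]
    by (simp add: scalar_prod_def a_def b_def power2_eq_square atLeast0LessThan)
  finally show ?thesis by simp
qed

lemma smult_mult_mat_vec:
  fixes A :: "'a :: comm_ring mat"
  assumes "A \<in> carrier_mat nr nc" "v \<in> carrier_vec nc"
  shows "(a \<cdot>\<^sub>m A) *\<^sub>v v = a \<cdot>\<^sub>v (A *\<^sub>v v)"
  using assms by (intro eq_vecI) auto

lemma smult_pow_mat:
  fixes A :: "'a :: comm_ring_1 mat"
  assumes "A \<in> carrier_mat n n"
  shows "(a \<cdot>\<^sub>m A) ^\<^sub>m k = a ^ k \<cdot>\<^sub>m A ^\<^sub>m k"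
proof (induction k)
  case (Suc k)
  have "(a \<cdot>\<^sub>m A) ^\<^sub>m Suc k = a ^ k \<cdot>\<^sub>m (A ^\<^sub>m k * (a \<cdot>\<^sub>m A))"
    using Suc assms by (simp add: mult_smult_assoc_mat[of _ n n _ n])
  also have "\<dots> = a ^ Suc k \<cdot>\<^sub>m A ^\<^sub>m Suc k"
    using assms by (auto simp: mult_smult_distrib[of _ n n _ n] intro!: eq_matI)
  finally show ?case .
qed (use assms in \<open>auto intro!: eq_matI\<close>)

lemma spectral_radius_nonneg:
  assumes "A \<in> carrier_mat n n" "0 < n"
  shows "0 \<le> spectral_radius A"
proof -
  obtain \<mu> where "spectral_radius A = cmod \<mu>"
    using spectral_radius_mem_max(1)[OF assms] by blast
  then show ?thesis by simp
qed

lemma spectral_radius_smult_le: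
  assumes A: "A \<in> carrier_mat n n" and "0 < n" "a \<noteq> 0"
  shows "spectral_radius (a \<cdot>\<^sub>m A) \<le> cmod a * spectral_radius A"
proof -
  have aA: "a \<cdot>\<^sub>m A \<in> carrier_mat n n" using A by simp
  obtain \<mu> where "\<mu> \<in> spectrum (a \<cdot>\<^sub>m A)" and \<mu>: "spectral_radius (a \<cdot>\<^sub>m A) = cmod \<mu>"
    using spectral_radius_mem_max(1)[OF aA \<open>0 < n\<close>] by auto
  then obtain v where v: "v \<in> carrier_vec n" "v \<noteq> 0\<^sub>v n" "a \<cdot>\<^sub>v (A *\<^sub>v v) = \<mu> \<cdot>\<^sub>v v"
    using A unfolding spectrum_def eigenvalue_def eigenvector_def
    by (auto simp: smult_mult_mat_vec[OF A])
  have "A *\<^sub>v v = inverse a \<cdot>\<^sub>v (a \<cdot>\<^sub>v (A *\<^sub>v v))"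
    using \<open>a \<noteq> 0\<close> by (simp add: smult_smult_assoc)
  also have "\<dots> = (\<mu> / a) \<cdot>\<^sub>v v"
    by (simp add: v(3) smult_smult_assoc divide_inverse mult.commute)
  finally have "A *\<^sub>v v = (\<mu> / a) \<cdot>\<^sub>v v" .
  then have "\<mu> / a \<in> spectrum A"
    using v A unfolding spectrum_def eigenvalue_def eigenvector_def by auto
  then have "cmod (\<mu> / a) \<le> spectral_radius A"
    using spectral_radius_mem_max(2)[OF A \<open>0 < n\<close>] by blast
  then have "cmod \<mu> \<le> cmod a * spectral_radius A"
    using \<open>a \<noteq> 0\<close> by (simp add: norm_divide pos_divide_le_eq mult.commute)
  then show ?thesis using \<mu> by simp
qed

lemma spectral_radius_less_imp_pow_bound:
  assumes A: "A \<in> carrier_mat n n" and "spectral_radius A < s"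
  shows "\<exists>c. \<forall>k i j. i < n \<longrightarrow> j < n \<longrightarrow> cmod ((A ^\<^sub>m k) $$ (i, j)) \<le> c * s ^ k"
proof (cases "n = 0")
  case False
  then have "0 < s" using spectral_radius_nonneg[OF A] \<open>spectral_radius A < s\<close> by simp
  define A' where "A' = complex_of_real (1 / s) \<cdot>\<^sub>m A"
  have A': "A' \<in> carrier_mat n n" unfolding A'_def using A by simp
  have "spectral_radius A' \<le> cmod (complex_of_real (1 / s)) * spectral_radius A"
    unfolding A'_def by (rule spectral_radius_smult_le[OF A]) (use False \<open>0 < s\<close> in auto)
  also have "\<dots> = spectral_radius A / s" using \<open>0 < s\<close> by (simp add: norm_divide)
  also have "\<dots> < 1" using \<open>spectral_radius A < s\<close> \<open>0 < s\<close> by simp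
  finally obtain c where c: "\<And>k. norm_bound (A' ^\<^sub>m k) c"
    using spectral_radius_jnf_norm_bound_less_1_upper_triangular[OF A'] by blast
  have "cmod ((A ^\<^sub>m k) $$ (i, j)) \<le> c * s ^ k" if "i < n" "j < n" for k i j
  proof -
    have "cmod ((A' ^\<^sub>m k) $$ (i, j)) \<le> c" using c[of k] that A' unfolding norm_bound_def by auto
    moreover have "(A' ^\<^sub>m k) $$ (i, j) = complex_of_real ((1 / s) ^ k) * (A ^\<^sub>m k) $$ (i, j)"
      unfolding A'_def smult_pow_mat[OF A] using that A by simp
    ultimately have "(1 / s) ^ k * cmod ((A ^\<^sub>m k) $$ (i, j)) \<le> c"
      using \<open>0 < s\<close> by (simp add: norm_mult norm_power norm_divide)
    then show ?thesis using \<open>0 < s\<close> by (simp add: power_one_over pos_divide_le_eq)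
  qed
  then show ?thesis by blast
qed simp

lemma pow_mat_Suc_left: "A \<in> carrier_mat n n \<Longrightarrow> A ^\<^sub>m Suc k = A * A ^\<^sub>m k"
proof (induction k)
  case (Suc k)
  then show ?case by (simp add: assoc_mult_mat[of A n n _ n A n])
qed simp

lemma symmetric_scalar_prod_mult_mat_vec:
  fixes B :: "'a :: comm_semiring_0 mat"
  assumes "B \<in> carrier_mat n n" "transpose_mat B = B" "u \<in> carrier_vec n" "w \<in> carrier_vec n"
  shows "u \<bullet> (B *\<^sub>v w) = (B *\<^sub>v u) \<bullet> w"
  using transpose_vec_mult_scalar[of B n n w u] assms by simp

lemma scalar_prod_self_nonneg: "(z :: real vec) \<bullet> z \<ge> 0"
  unfolding scalar_prod_def by (intro sum_nonneg) auto

lemma scalar_prod_self_eq_0_iff: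
  "(z :: real vec) \<in> carrier_vec n \<Longrightarrow> z \<bullet> z = 0 \<longleftrightarrow> z = 0\<^sub>v n"
  unfolding scalar_prod_def by (auto simp: sum_nonneg_eq_0_iff vec_eq_iff)

lemma symmetric_iterates_log_convex:
  fixes B :: "real mat"
  assumes B: "B \<in> carrier_mat n n" "transpose_mat B = B" and z: "z \<in> carrier_vec n"
  defines "N k \<equiv> (B ^\<^sub>m k *\<^sub>v z) \<bullet> (B ^\<^sub>m k *\<^sub>v z)"
  shows "N (Suc k) ^ 2 \<le> N k * N (Suc (Suc k))"
proof -
  define W where "W k = B ^\<^sub>m k *\<^sub>v z" for k
  have W: "W k \<in> carrier_vec n" for k
    unfolding W_def using B(1) z by (auto intro: mult_mat_vec_carrier pow_carrier_mat)
  have W_Suc: "W (Suc k) = B *\<^sub>v W k" for k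
    unfolding W_def using B(1) z
    by (simp add: pow_mat_Suc_left[OF B(1)] assoc_mult_mat_vec[of _ n n _ n] del: pow_mat.simps)
  have "N (Suc k) = W k \<bullet> W (Suc (Suc k))"
    unfolding N_def W_def[symmetric] W_Suc[of "Suc k"]
    using symmetric_scalar_prod_mult_mat_vec[OF B W[of k] W[of "Suc k"]] by (simp add: W_Suc)
  then show ?thesis
    unfolding N_def W_def[symmetric] using scalar_prod_Cauchy_Schwarz[OF W W] by simp
qed

lemma real_pow_mult_vec_entry_bound:
  fixes B :: "real mat"
  assumes B: "B \<in> carrier_mat n n" and z: "z \<in> carrier_vec n"
    and "spectral_radius (map_mat complex_of_real B) < s"
  shows "\<exists>c. \<forall>k i. i < n \<longrightarrow> \<bar>(B ^\<^sub>m k *\<^sub>v z) $ i\<bar> \<le> c * s ^ k"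
proof -
  obtain c where c: "\<And>k i j. i < n \<Longrightarrow> j < n \<Longrightarrow>
      cmod ((map_mat complex_of_real B ^\<^sub>m k) $$ (i, j)) \<le> c * s ^ k"
    using spectral_radius_less_imp_pow_bound[of _ n] assms by fastforce
  define Z where "Z = (\<Sum>j<n. \<bar>z $ j\<bar>)"
  have "\<bar>(B ^\<^sub>m k *\<^sub>v z) $ i\<bar> \<le> c * Z * s ^ k" if "i < n" for k i
  proof -
    have "\<bar>(B ^\<^sub>m k *\<^sub>v z) $ i\<bar> = \<bar>\<Sum>j<n. (B ^\<^sub>m k) $$ (i, j) * z $ j\<bar>"
      using that B z by (simp add: scalar_prod_def atLeast0LessThan)
    also have "\<dots> \<le> (\<Sum>j<n. \<bar>(B ^\<^sub>m k) $$ (i, j)\<bar> * \<bar>z $ j\<bar>)"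
      by (rule order_trans[OF sum_abs]) (simp add: abs_mult)
    also have "\<dots> \<le> (\<Sum>j<n. c * s ^ k * \<bar>z $ j\<bar>)"
    proof (intro sum_mono mult_right_mono)
      fix j assume "j \<in> {..<n}"
      then have "(map_mat complex_of_real B ^\<^sub>m k) $$ (i, j) = complex_of_real ((B ^\<^sub>m k) $$ (i, j))"
        using that B by (simp add: of_real_hom.mat_hom_pow[OF B, symmetric])
      then show "\<bar>(B ^\<^sub>m k) $$ (i, j)\<bar> \<le> c * s ^ k"
        using c[of i j k] that \<open>j \<in> {..<n}\<close> by simp
    qed simp
    also have "\<dots> = c * Z * s ^ k" unfolding Z_def by (simp add: sum_distrib_left mult_ac)
    finally show ?thesis .
  qed
  then show ?thesis by blast
qed

lemma real_pow_mult_vec_bound: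
  fixes B :: "real mat"
  assumes B: "B \<in> carrier_mat n n" and z: "z \<in> carrier_vec n"
    and "spectral_radius (map_mat complex_of_real B) < s"
  shows "\<exists>K. \<forall>k. (B ^\<^sub>m k *\<^sub>v z) \<bullet> (B ^\<^sub>m k *\<^sub>v z) \<le> K * (s\<^sup>2) ^ k"
proof -
  obtain c where c: "\<And>k i. i < n \<Longrightarrow> \<bar>(B ^\<^sub>m k *\<^sub>v z) $ i\<bar> \<le> c * s ^ k"
    using real_pow_mult_vec_entry_bound[OF assms] by blast
  have "(B ^\<^sub>m k *\<^sub>v z) \<bullet> (B ^\<^sub>m k *\<^sub>v z) \<le> (real n * c\<^sup>2) * (s\<^sup>2) ^ k" for k
  proof -
    have "(B ^\<^sub>m k *\<^sub>v z) \<bullet> (B ^\<^sub>m k *\<^sub>v z) = (\<Sum>i<n. ((B ^\<^sub>m k *\<^sub>v z) $ i)\<^sup>2)"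
      using B by (simp add: scalar_prod_def atLeast0LessThan power2_eq_square)
    also have "\<dots> \<le> (\<Sum>i<n. (c * s ^ k)\<^sup>2)"
      using c by (intro sum_mono) (meson abs_le_square_iff abs_ge_self order_trans lessThan_iff)
    also have "\<dots> = (real n * c\<^sup>2) * (s\<^sup>2) ^ k"
      by (simp add: power_mult_distrib power_mult[symmetric] mult.commute)
    finally show ?thesis .
  qed
  then show ?thesis by blast
qed

lemma symmetric_iterates_norm_lower_bound:
  fixes B :: "real mat"
  assumes B: "B \<in> carrier_mat n n" "transpose_mat B = B" and z: "z \<in> carrier_vec n"
    and "0 \<le> Q" and rayleigh: "Q * (z \<bullet> z) \<le> z \<bullet> (B *\<^sub>v z)"
  shows "(Q\<^sup>2) ^ k * (z \<bullet> z) \<le> (B ^\<^sub>m k *\<^sub>v z) \<bullet> (B ^\<^sub>m k *\<^sub>v z)"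
proof -
  define N where "N k = (B ^\<^sub>m k *\<^sub>v z) \<bullet> (B ^\<^sub>m k *\<^sub>v z)" for k
  have N0: "N 0 = z \<bullet> z" and N1: "N 1 = (B *\<^sub>v z) \<bullet> (B *\<^sub>v z)"
    unfolding N_def using B(1) z by simp_all
  have log_convex: "N (Suc k) ^ 2 \<le> N k * N (Suc (Suc k))" for k
    unfolding N_def by (rule symmetric_iterates_log_convex[OF B z])
  have base: "Q\<^sup>2 * N 0 \<le> N 1"
  proof (cases "N 0 = 0")
    case False
    then have "0 < N 0" using scalar_prod_self_nonneg[of z] unfolding N0 by linarith
    have "(Q * N 0)\<^sup>2 \<le> (z \<bullet> (B *\<^sub>v z))\<^sup>2"
      using rayleigh \<open>0 \<le> Q\<close> \<open>0 < N 0\<close> unfolding N0 by (intro power_mono) auto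
    also have "\<dots> \<le> N 0 * N 1"
      unfolding N0 N1 using scalar_prod_Cauchy_Schwarz[of z n "B *\<^sub>v z"] B(1) z by simp
    finally show ?thesis using \<open>0 < N 0\<close> by (simp add: power2_eq_square)
  qed (simp add: N_def scalar_prod_self_nonneg)
  have "(Q\<^sup>2) ^ k * N 0 \<le> N k"
    by (rule log_convex_geometric_lower_bound[OF _ log_convex _ base]) (simp_all add: N_def scalar_prod_self_nonneg)
  then show ?thesis unfolding N0 by (simp add: N_def)
qed

(* The norms of the iterates B^k z grow at least like the k-th power of the Rayleigh quotient
   of z (they are log-convex), but at most like s^k for any s above the spectral radius. *)
lemma symmetric_quadratic_form_le_spectral_radius:
  fixes B :: "real mat"
  assumes B: "B \<in> carrier_mat n n" "transpose_mat B = B" and z: "z \<in> carrier_vec n"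
  shows "z \<bullet> (B *\<^sub>v z) \<le> spectral_radius (map_mat complex_of_real B) * (z \<bullet> z)"
proof (rule ccontr)
  define r where "r = spectral_radius (map_mat complex_of_real B)"
  assume "\<not> z \<bullet> (B *\<^sub>v z) \<le> r * (z \<bullet> z)"
  then have above: "r * (z \<bullet> z) < z \<bullet> (B *\<^sub>v z)" by simp
  then have "z \<noteq> 0\<^sub>v n" using B(1) by auto
  then have "0 < z \<bullet> z"
    using scalar_prod_self_nonneg[of z] scalar_prod_self_eq_0_iff[OF z] by linarith
  then have "0 < n" using z by (cases n) (auto simp: scalar_prod_def)
  define Q where "Q = z \<bullet> (B *\<^sub>v z) / (z \<bullet> z)"
  have "0 \<le> r" unfolding r_def using B(1) \<open>0 < n\<close> by (intro spectral_radius_nonneg) auto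
  have "r < Q" unfolding Q_def using above \<open>0 < z \<bullet> z\<close> by (simp add: field_simps)
  define s where "s = (r + Q) / 2"
  have "r < s" "s < Q" "0 < s" unfolding s_def using \<open>r < Q\<close> \<open>0 \<le> r\<close> by auto
  obtain K where upper: "\<And>k. (B ^\<^sub>m k *\<^sub>v z) \<bullet> (B ^\<^sub>m k *\<^sub>v z) \<le> K * (s\<^sup>2) ^ k"
    using real_pow_mult_vec_bound[OF B(1) z, of s] \<open>r < s\<close> unfolding r_def by blast
  have lower: "(Q\<^sup>2) ^ k * (z \<bullet> z) \<le> (B ^\<^sub>m k *\<^sub>v z) \<bullet> (B ^\<^sub>m k *\<^sub>v z)" for k
    using symmetric_iterates_norm_lower_bound[OF B z] \<open>0 < s\<close> \<open>s < Q\<close> \<open>0 < z \<bullet> z\<close>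
    unfolding Q_def by simp
  have "1 < Q\<^sup>2 / s\<^sup>2" using \<open>0 < s\<close> \<open>s < Q\<close> by (simp add: power_strict_mono)
  then obtain k where "K / (z \<bullet> z) < (Q\<^sup>2 / s\<^sup>2) ^ k" using real_arch_pow by blast
  moreover have "(Q\<^sup>2 / s\<^sup>2) ^ k * (s\<^sup>2) ^ k * (z \<bullet> z) \<le> K * (s\<^sup>2) ^ k"
    using order_trans[OF lower upper, of k] \<open>0 < s\<close> by (simp add: power_divide)
  ultimately show False
    using \<open>0 < z \<bullet> z\<close> \<open>0 < s\<close> by (simp add: field_simps)
qed

lemma symmetric_quadratic_form_perturb:
  fixes B :: "real mat" and t :: real
  assumes B: "B \<in> carrier_mat n n" "transpose_mat B = B" and y: "y \<in> carrier_vec n" and "k < n"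
  defines "z \<equiv> y + t \<cdot>\<^sub>v unit_vec n k"
  shows "z \<bullet> (B *\<^sub>v z) = y \<bullet> (B *\<^sub>v y) + 2 * t * (B *\<^sub>v y) $ k + t\<^sup>2 * B $$ (k, k)"
    and "z \<bullet> z = y \<bullet> y + 2 * t * y $ k + t\<^sup>2"
proof -
  define e :: "real vec" where "e = unit_vec n k"
  have e: "e \<in> carrier_vec n" unfolding e_def by simp
  have "y \<bullet> (B *\<^sub>v e) = (B *\<^sub>v y) $ k"
    using symmetric_scalar_prod_mult_mat_vec[OF B y e] B \<open>k < n\<close> unfolding e_def by simp
  moreover have "e \<bullet> (B *\<^sub>v y) = (B *\<^sub>v y) $ k" "e \<bullet> (B *\<^sub>v e) = B $$ (k, k)" "e \<bullet> y = y $ k"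
    using B y \<open>k < n\<close> unfolding e_def by simp_all
  moreover have "B *\<^sub>v z = B *\<^sub>v y + t \<cdot>\<^sub>v (B *\<^sub>v e)"
    unfolding z_def e_def[symmetric] using B(1) y e by (simp add: mult_add_distrib_mat_vec mult_mat_vec)
  ultimately show "z \<bullet> (B *\<^sub>v z) = y \<bullet> (B *\<^sub>v y) + 2 * t * (B *\<^sub>v y) $ k + t\<^sup>2 * B $$ (k, k)"
    unfolding z_def e_def[symmetric] using B(1) y e
    by (simp add: add_scalar_prod_distrib[of _ n] scalar_prod_add_distrib[of _ n] power2_eq_square algebra_simps)
  show "z \<bullet> z = y \<bullet> y + 2 * t * y $ k + t\<^sup>2"
    unfolding z_def e_def[symmetric] using y e \<open>e \<bullet> y = y $ k\<close> \<open>k < n\<close>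
    by (simp add: add_scalar_prod_distrib[of _ n] scalar_prod_add_distrib[of _ n] comm_scalar_prod[of y n e]
        power2_eq_square algebra_simps e_def)
qed

lemma quadratic_form_maximizer_eigenvector:
  fixes B :: "real mat"
  assumes B: "B \<in> carrier_mat n n" "transpose_mat B = B"
    and bound: "\<And>z. z \<in> carrier_vec n \<Longrightarrow> z \<bullet> (B *\<^sub>v z) \<le> r * (z \<bullet> z)"
    and y: "y \<in> carrier_vec n" and attained: "r * (y \<bullet> y) \<le> y \<bullet> (B *\<^sub>v y)"
  shows "B *\<^sub>v y = r \<cdot>\<^sub>v y"
proof (rule eq_vecI)
  fix k assume "k < dim_vec (r \<cdot>\<^sub>v y)"
  then have "k < n" using y by simp
  define a where "a = (B *\<^sub>v y) $ k - r * y $ k"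
  define d where "d = B $$ (k, k) - r"
  have perturbed: "2 * t * a + t\<^sup>2 * d \<le> 0" for t
    using bound[of "y + t \<cdot>\<^sub>v unit_vec n k"] attained y
      symmetric_quadratic_form_perturb[OF B y \<open>k < n\<close>, of t]
    unfolding a_def d_def by (simp add: algebra_simps)
  define c where "c = \<bar>d\<bar> + 1"
  have "c > 0" "2 * c + d > 0" unfolding c_def by (simp_all add: abs_if)
  have "2 * (a / c) * a + (a / c)\<^sup>2 * d = a\<^sup>2 * (2 * c + d) / c\<^sup>2"
    using \<open>c > 0\<close> by (simp add: field_simps power2_eq_square)
  with perturbed[of "a / c"] have "a\<^sup>2 * (2 * c + d) \<le> 0"
    using \<open>c > 0\<close> by (simp add: divide_le_0_iff)
  then have "a = 0" using \<open>2 * c + d > 0\<close> by (simp add: mult_le_0_iff)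
  then show "(B *\<^sub>v y) $ k = (r \<cdot>\<^sub>v y) $ k" unfolding a_def using \<open>k < n\<close> y by simp
qed (use B y in simp)

lemma symmetric_superharmonic_imp_eigenvector:
  fixes B :: "real mat"
  assumes B: "B \<in> carrier_mat n n" "transpose_mat B = B" and y: "y \<in> carrier_vec n"
    and nonneg: "\<And>i. i < n \<Longrightarrow> 0 \<le> y $ i"
    and super: "\<And>i. i < n \<Longrightarrow> r * y $ i \<le> (B *\<^sub>v y) $ i"
    and r: "r = spectral_radius (map_mat complex_of_real B)"
  shows "B *\<^sub>v y = r \<cdot>\<^sub>v y"
proof (rule quadratic_form_maximizer_eigenvector[OF B _ y])
  show "z \<bullet> (B *\<^sub>v z) \<le> r * (z \<bullet> z)" if "z \<in> carrier_vec n" for z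
    unfolding r by (rule symmetric_quadratic_form_le_spectral_radius[OF B that])
  have "r * (y \<bullet> y) = (\<Sum>i<n. y $ i * (r * y $ i))"
    using y by (simp add: scalar_prod_def sum_distrib_left atLeast0LessThan mult_ac)
  also have "\<dots> \<le> (\<Sum>i<n. y $ i * (B *\<^sub>v y) $ i)"
    using nonneg super by (intro sum_mono mult_left_mono) auto
  also have "\<dots> = y \<bullet> (B *\<^sub>v y)"
    using B(1) by (simp add: scalar_prod_def atLeast0LessThan)
  finally show "r * (y \<bullet> y) \<le> y \<bullet> (B *\<^sub>v y)" .
qed

section \<open>Gain adjacency matrices of maximal spectral radius\<close>

definition adjacency_mat :: "nat \<Rightarrow> (nat \<Rightarrow> nat \<Rightarrow> bool) \<Rightarrow> real mat" where
  "adjacency_mat n E = mat n n (\<lambda>(s, t). if E s t then 1 else 0)"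

lemma adjacency_mat_carrier [simp]: "adjacency_mat n E \<in> carrier_mat n n"
  unfolding adjacency_mat_def by simp

lemma adjacency_mat_dim [simp]: "dim_row (adjacency_mat n E) = n" "dim_col (adjacency_mat n E) = n"
  unfolding adjacency_mat_def by simp_all

lemma adjacency_mat_index [simp]:
  "i < n \<Longrightarrow> j < n \<Longrightarrow> adjacency_mat n E $$ (i, j) = (if E i j then 1 else 0)"
  unfolding adjacency_mat_def by simp

lemma adjacency_mat_symmetric: "simple_graph n E \<Longrightarrow> transpose_mat (adjacency_mat n E) = adjacency_mat n E"
  unfolding simple_graph_def by (intro eq_matI) fastforce+

lemma gain_adj_one: "gain_adj n E (\<lambda>_ _. 1) = map_mat complex_of_real (adjacency_mat n E)"
  by (intro eq_matI) auto

lemma Re_eq_norm_imp_real: "Re z = cmod z \<Longrightarrow> z = complex_of_real (cmod z)"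
  using cmod_power2[of z] by (intro complex_eqI) auto

lemma norm_sum_eq_imp_aligned:
  fixes f :: "'a \<Rightarrow> complex"
  assumes "finite S" and "cmod (\<Sum>j\<in>S. f j) = (\<Sum>j\<in>S. cmod (f j))" and "j \<in> S"
  shows "f j * cmod (\<Sum>j\<in>S. f j) = cmod (f j) * (\<Sum>j\<in>S. f j)"
proof (cases "(\<Sum>j\<in>S. f j) = 0")
  case False
  define T where "T = (\<Sum>j\<in>S. f j)"
  define \<omega> where "\<omega> = T / cmod T"
  have "T \<noteq> 0" using False unfolding T_def .
  have "cmod \<omega> = 1" unfolding \<omega>_def using \<open>T \<noteq> 0\<close> by (simp add: norm_divide)
  have Re_le: "Re (cnj \<omega> * f i) \<le> cmod (f i)" for i
    using complex_Re_le_cmod[of "cnj \<omega> * f i"] \<open>cmod \<omega> = 1\<close> by (simp add: norm_mult)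
  have "cnj \<omega> * T = T * cnj T / cmod T" unfolding \<omega>_def by (simp add: mult.commute)
  also have "\<dots> = cmod T"
    unfolding complex_norm_square[symmetric] using \<open>T \<noteq> 0\<close> by (simp add: power2_eq_square)
  finally have "cnj \<omega> * T = cmod T" .
  \<comment> \<open>after rotation by cnj \<omega> the real parts of the terms add up to the sum of their norms\<close>
  have "(\<Sum>i\<in>S. Re (cnj \<omega> * f i)) = Re (cnj \<omega> * T)"
    unfolding T_def sum_distrib_left Re_sum ..
  then have "(\<Sum>i\<in>S. cmod (f i) - Re (cnj \<omega> * f i)) = 0"
    using assms(2) \<open>cnj \<omega> * T = cmod T\<close> unfolding T_def[symmetric] by (simp add: sum_subtractf)
  then have "Re (cnj \<omega> * f j) = cmod (cnj \<omega> * f j)"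
    using sum_nonneg_eq_0_iff[of S "\<lambda>i. cmod (f i) - Re (cnj \<omega> * f i)"] assms(1,3) Re_le
      \<open>cmod \<omega> = 1\<close> by (simp add: norm_mult)
  then have "cnj \<omega> * f j = cmod (f j)"
    using \<open>cmod \<omega> = 1\<close> by (metis Re_eq_norm_imp_real norm_mult complex_mod_cnj mult_1)
  then have "f j = \<omega> * cmod (f j)"
    using unit_mult_cnj[OF \<open>cmod \<omega> = 1\<close>] by (metis mult.assoc mult_1)
  then show ?thesis
    unfolding T_def[symmetric] \<omega>_def using \<open>T \<noteq> 0\<close> by (simp add: field_simps)
qed (use assms in \<open>simp add: sum_nonneg_eq_0_iff\<close>)

lemma gain_adj_mult_vec_index:
  "i < n \<Longrightarrow> x \<in> carrier_vec n \<Longrightarrow>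
    (gain_adj n E \<psi> *\<^sub>v x) $ i = (\<Sum>j<n. if E i j then \<psi> i j * x $ j else 0)"
  by (auto simp: scalar_prod_def atLeast0LessThan intro: sum.cong)

lemma adjacency_mat_mult_vec_index:
  "i < n \<Longrightarrow> y \<in> carrier_vec n \<Longrightarrow>
    (adjacency_mat n E *\<^sub>v y) $ i = (\<Sum>j<n. if E i j then y $ j else 0)"
  by (auto simp: scalar_prod_def atLeast0LessThan intro: sum.cong)

lemma eigenvector_norms_superharmonic:
  assumes "T_gain E \<psi>" and x: "x \<in> carrier_vec n" "gain_adj n E \<psi> *\<^sub>v x = ev \<cdot>\<^sub>v x" and "i < n"
  shows "cmod ev * cmod (x $ i) \<le> (adjacency_mat n E *\<^sub>v vec n (\<lambda>j. cmod (x $ j))) $ i"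
proof -
  have "cmod ev * cmod (x $ i) = cmod (\<Sum>j<n. if E i j then \<psi> i j * x $ j else 0)"
    using x \<open>i < n\<close> gain_adj_mult_vec_index[OF \<open>i < n\<close> x(1), of E \<psi>] by (simp add: norm_mult[symmetric])
  also have "\<dots> \<le> (\<Sum>j<n. cmod (if E i j then \<psi> i j * x $ j else 0))"
    by (rule norm_sum)
  also have "\<dots> = (\<Sum>j<n. if E i j then cmod (x $ j) else 0)"
    using T_gainD(1)[OF assms(1)] by (intro sum.cong) (auto simp: norm_mult)
  also have "\<dots> = (adjacency_mat n E *\<^sub>v vec n (\<lambda>j. cmod (x $ j))) $ i"
    using \<open>i < n\<close> by (subst adjacency_mat_mult_vec_index) (auto intro: sum.cong)
  finally show ?thesis .
qed

lemma connected_nonneg_eigenvector_positive: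
  assumes "simple_graph n E" "graph_connected n E" and y: "y \<in> carrier_vec n" "y \<noteq> 0\<^sub>v n"
    and nonneg: "\<And>i. i < n \<Longrightarrow> 0 \<le> y $ i" and eigen: "adjacency_mat n E *\<^sub>v y = r \<cdot>\<^sub>v y"
    and "i < n"
  shows "0 < y $ i"
proof (rule ccontr)
  assume "\<not> 0 < y $ i"
  then have "y $ i = 0" using nonneg[OF \<open>i < n\<close>] by simp
  have "y $ t = 0" if "(s, t) \<in> {(a, b). E a b}\<^sup>*" "y $ s = 0" for s t
    using that
  proof (induction rule: rtrancl_induct)
    case (step t u)
    then have "E t u" "t < n" "u < n" using assms(1) unfolding simple_graph_def by auto
    \<comment> \<open>a vanishing entry forces its neighbours to vanish, as they sum to r times it\<close>
    have "(\<Sum>j<n. if E t j then y $ j else 0) = 0"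
      using eigen adjacency_mat_mult_vec_index[OF \<open>t < n\<close> y(1)] step.IH step.prems \<open>t < n\<close> y(1)
      by (metis index_smult_vec(1) carrier_vecD mult_zero_right)
    then have "(if E t u then y $ u else 0) = 0"
      using nonneg \<open>u < n\<close> by (subst (asm) sum_nonneg_eq_0_iff) auto
    then show ?case using \<open>E t u\<close> by simp
  qed
  then have "y = 0\<^sub>v n"
    using assms(2) \<open>y $ i = 0\<close> \<open>i < n\<close> y(1) unfolding graph_connected_def by (auto simp: vec_eq_iff)
  with y(2) show False ..
qed

lemma eigenvector_norms_perron:
  assumes sg: "simple_graph n E" and conn: "graph_connected n E" and gain: "T_gain E \<psi>"
    and "E p q"
    and x: "x \<in> carrier_vec n" "x \<noteq> 0\<^sub>v n" "gain_adj n E \<psi> *\<^sub>v x = ev \<cdot>\<^sub>v x"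
    and ev: "cmod ev = spectral_radius (map_mat complex_of_real (adjacency_mat n E))"
  defines "y \<equiv> vec n (\<lambda>i. cmod (x $ i))"
  shows "adjacency_mat n E *\<^sub>v y = cmod ev \<cdot>\<^sub>v y" and "\<forall>i<n. 0 < y $ i" and "0 < cmod ev"
proof -
  have "p < n" "q < n" using \<open>E p q\<close> sg unfolding simple_graph_def by auto
  have y: "y \<in> carrier_vec n" "y \<noteq> 0\<^sub>v n" using x(1,2) unfolding y_def by (auto simp: vec_eq_iff)
  have super: "cmod ev * y $ i \<le> (adjacency_mat n E *\<^sub>v y) $ i" if "i < n" for i
    using eigenvector_norms_superharmonic[OF gain x(1,3) that] that unfolding y_def by simp
  show eigen: "adjacency_mat n E *\<^sub>v y = cmod ev \<cdot>\<^sub>v y"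
    using symmetric_superharmonic_imp_eigenvector[OF _ adjacency_mat_symmetric[OF sg] y(1) _ super ev]
    unfolding y_def by simp
  show pos: "\<forall>i<n. 0 < y $ i"
    using connected_nonneg_eigenvector_positive[OF sg conn y _ eigen] unfolding y_def by simp
  have "y $ q \<le> (adjacency_mat n E *\<^sub>v y) $ p"
    unfolding adjacency_mat_mult_vec_index[OF \<open>p < n\<close> y(1)]
    using member_le_sum[of q "{..<n}" "\<lambda>j. if E p j then y $ j else 0"] \<open>q < n\<close> \<open>E p q\<close> pos
    by (auto simp: less_imp_le)
  moreover have "(adjacency_mat n E *\<^sub>v y) $ p = cmod ev * y $ p"
    using eigen \<open>p < n\<close> y(1) by simp
  ultimately have "0 < cmod ev * y $ p" using pos \<open>q < n\<close> by force
  then show "0 < cmod ev" using pos \<open>p < n\<close> by (simp add: zero_less_mult_iff)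
qed

lemma eigenvector_phases_switching:
  assumes sg: "simple_graph n E" and gain: "T_gain E \<psi>"
    and x: "x \<in> carrier_vec n" "gain_adj n E \<psi> *\<^sub>v x = ev \<cdot>\<^sub>v x"
    and eigen: "adjacency_mat n E *\<^sub>v vec n (\<lambda>i. cmod (x $ i)) = cmod ev \<cdot>\<^sub>v vec n (\<lambda>i. cmod (x $ i))"
    and nonzero: "\<forall>i<n. x $ i \<noteq> 0" and "ev \<noteq> 0"
    and "E i j"
  shows "\<psi> i j * (x $ j / cmod (x $ j)) = ev / cmod ev * (x $ i / cmod (x $ i))"
proof -
  have "i < n" "j < n" using \<open>E i j\<close> sg unfolding simple_graph_def by auto
  let ?c = "\<lambda>j. if E i j then \<psi> i j * x $ j else 0"
  have Ax: "ev * x $ i = (\<Sum>j<n. ?c j)"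
    using x gain_adj_mult_vec_index[OF \<open>i < n\<close> x(1), of E \<psi>] \<open>i < n\<close> by simp
  have "(\<Sum>j<n. cmod (?c j)) = (adjacency_mat n E *\<^sub>v vec n (\<lambda>i. cmod (x $ i))) $ i"
    unfolding adjacency_mat_mult_vec_index[OF \<open>i < n\<close> vec_carrier]
    using T_gainD(1)[OF gain] by (intro sum.cong) (auto simp: norm_mult)
  also have "\<dots> = cmod (ev * x $ i)"
    using eigen \<open>i < n\<close> by (simp add: norm_mult)
  finally have "?c j * cmod (ev * x $ i) = cmod (?c j) * (ev * x $ i)"
    unfolding Ax using \<open>j < n\<close> by (intro norm_sum_eq_imp_aligned) auto
  then have "\<psi> i j * x $ j * (cmod ev * cmod (x $ i)) = cmod (x $ j) * (ev * x $ i)"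
    using \<open>E i j\<close> T_gainD(1)[OF gain \<open>E i j\<close>] by (simp add: norm_mult)
  then show ?thesis
    using nonzero \<open>i < n\<close> \<open>j < n\<close> \<open>ev \<noteq> 0\<close> by (simp add: field_simps)
qed

lemma spectral_radius_eq_imp_switching:
  assumes sg: "simple_graph n E" and conn: "graph_connected n E" and gain: "T_gain E \<psi>"
    and "E p q"
    and radius: "spectral_radius (gain_adj n E \<psi>) = spectral_radius (gain_adj n E (\<lambda>_ _. 1))"
  shows "\<exists>\<mu> u. (\<forall>i<n. u i \<noteq> 0) \<and> (\<forall>i j. E i j \<longrightarrow> \<psi> i j * u j = \<mu> * u i)"
proof -
  have "p < n" using \<open>E p q\<close> sg unfolding simple_graph_def by blast
  then have "0 < n" by simp
  have "spectral_radius (gain_adj n E \<psi>) \<in> cmod ` spectrum (gain_adj n E \<psi>)"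
    using spectral_radius_mem_max(1)[OF gain_adj_carrier \<open>0 < n\<close>] .
  then obtain ev where "ev \<in> spectrum (gain_adj n E \<psi>)"
    and ev: "cmod ev = spectral_radius (map_mat complex_of_real (adjacency_mat n E))"
    using radius unfolding gain_adj_one by (metis imageE)
  then obtain x where x: "x \<in> carrier_vec n" "x \<noteq> 0\<^sub>v n" "gain_adj n E \<psi> *\<^sub>v x = ev \<cdot>\<^sub>v x"
    unfolding spectrum_def eigenvalue_def eigenvector_def by auto
  note perron = eigenvector_norms_perron[OF sg conn gain \<open>E p q\<close> x ev]
  have "\<forall>i<n. x $ i \<noteq> 0" "ev \<noteq> 0" using perron(2,3) by auto
  then have "\<forall>i j. E i j \<longrightarrow> \<psi> i j * (x $ j / cmod (x $ j)) = ev / cmod ev * (x $ i / cmod (x $ i))"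
    using eigenvector_phases_switching[OF sg gain x(1,3) perron(1)] by blast
  moreover have "\<forall>i<n. x $ i / cmod (x $ i) \<noteq> 0" using \<open>\<forall>i<n. x $ i \<noteq> 0\<close> by simp
  ultimately show ?thesis
    by (intro exI[of _ "ev / cmod ev"] exI[of _ "\<lambda>i. x $ i / cmod (x $ i)"]) simp
qed

lemma switching_factor_square:
  assumes "T_gain E \<psi>" "E p q" "E q p" "u p \<noteq> 0" "u q \<noteq> 0"
    and switching: "\<forall>i j. E i j \<longrightarrow> \<psi> i j * u j = \<mu> * u i"
  shows "\<mu>\<^sup>2 = 1"
proof -
  have "(\<psi> p q * u q) * (\<psi> q p * u p) = (\<mu> * u p) * (\<mu> * u q)"
    using switching assms(2,3) by simp
  moreover have "\<psi> p q * \<psi> q p = 1"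
    using T_gainD[OF assms(1,2)] unit_mult_cnj by simp
  ultimately have "u p * u q = \<mu>\<^sup>2 * (u p * u q)"
    by (simp add: power2_eq_square algebra_simps)
  then show ?thesis using assms(4,5) by simp
qed

lemma switching_along_path:
  fixes \<psi> :: "nat \<Rightarrow> nat \<Rightarrow> complex"
  assumes path: "\<forall>k. Suc k < length vs \<longrightarrow> E (vs ! k) (vs ! Suc k) \<and> \<psi> (vs ! k) (vs ! Suc k) = 1"
    and switching: "\<forall>i j. E i j \<longrightarrow> \<psi> i j * u j = \<mu> * u i"
    and "k < length vs"
  shows "u (vs ! k) = \<mu> ^ k * u (vs ! 0)"
  using \<open>k < length vs\<close>
proof (induction k)
  case (Suc k)
  then have edge: "E (vs ! k) (vs ! Suc k)" and "\<psi> (vs ! k) (vs ! Suc k) = 1" using path by blast+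
  then have "u (vs ! Suc k) = \<mu> * u (vs ! k)" using switching[rule_format, OF edge] by simp
  then show ?case using Suc by simp
qed simp

section \<open>Cycles\<close>

lemma distinct_cycle_edges:
  assumes "distinct vs" "3 \<le> length vs"
  shows "last vs \<noteq> hd vs" and "Suc k < length vs \<Longrightarrow> {vs ! k, vs ! Suc k} \<noteq> {last vs, hd vs}"
proof -
  have "vs \<noteq> []" using assms(2) by auto
  then have ends: "last vs = vs ! (length vs - 1)" "hd vs = vs ! 0"
    by (simp_all add: last_conv_nth hd_conv_nth)
  have index_eq: "vs ! i = vs ! j \<longleftrightarrow> i = j" if "i < length vs" "j < length vs" for i j
    using nth_eq_iff_index_eq[OF assms(1) that] .
  show "last vs \<noteq> hd vs" unfolding ends using index_eq[of "length vs - 1" 0] assms(2) \<open>vs \<noteq> []\<close> by simp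
  assume "Suc k < length vs"
  then have lt: "k < length vs" "length vs - 1 < length vs" "0 < length vs" by auto
  have "vs ! k \<noteq> vs ! (length vs - 1)"
    using index_eq[OF lt(1,2)] \<open>Suc k < length vs\<close> by simp
  moreover have "vs ! Suc k \<noteq> vs ! (length vs - 1)" if "vs ! k = vs ! 0"
  proof -
    have "k = 0" using that index_eq[OF lt(1,3)] by simp
    then show ?thesis using index_eq[OF \<open>Suc k < length vs\<close> lt(2)] assms(2) by simp
  qed
  ultimately show "{vs ! k, vs ! Suc k} \<noteq> {last vs, hd vs}"
    unfolding ends doubleton_eq_iff by blast
qed

lemma cycle_gain_switching:
  fixes \<psi> :: "nat \<Rightarrow> nat \<Rightarrow> complex"
  assumes path: "\<forall>k. Suc k < length vs \<longrightarrow> E (vs ! k) (vs ! Suc k) \<and> \<psi> (vs ! k) (vs ! Suc k) = 1"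
    and closing: "E (last vs) (hd vs)" and "vs \<noteq> []"
    and switching: "\<forall>i j. E i j \<longrightarrow> \<psi> i j * u j = \<mu> * u i"
  shows "\<psi> (last vs) (hd vs) * u (hd vs) = \<mu> ^ length vs * u (hd vs)"
proof -
  have "u (last vs) = \<mu> ^ (length vs - 1) * u (hd vs)"
    using switching_along_path[OF path switching, of "length vs - 1"] \<open>vs \<noteq> []\<close>
    by (simp add: last_conv_nth hd_conv_nth)
  moreover have "\<mu> * \<mu> ^ (length vs - 1) = \<mu> ^ length vs"
    using \<open>vs \<noteq> []\<close> by (simp add: power_Suc[symmetric])
  ultimately show ?thesis using switching[rule_format, OF closing] by (simp add: mult.assoc)
qed

lemma has_cycle_imp_spectral_radius_differs:
  assumes sg: "simple_graph n E" and conn: "graph_connected n E" and "has_cycle E"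
  shows "\<exists>\<phi> \<psi>. T_gain E \<phi> \<and> T_gain E \<psi> \<and>
           spectral_radius (gain_adj n E \<phi>) \<noteq> spectral_radius (gain_adj n E \<psi>)"
proof -
  obtain vs where "3 \<le> length vs" "distinct vs"
    and path: "\<forall>k. Suc k < length vs \<longrightarrow> E (vs ! k) (vs ! Suc k)"
    and closing: "E (last vs) (hd vs)"
    using \<open>has_cycle E\<close> unfolding has_cycle_def by blast
  then have "vs \<noteq> []" by auto
  define p q where "p = last vs" and "q = hd vs"
  have "E p q" "E q p" "p < n" "q < n"
    using closing sg unfolding p_def q_def simple_graph_def by blast+
  have "p \<noteq> q" unfolding p_def q_def by (rule distinct_cycle_edges(1)[OF \<open>distinct vs\<close> \<open>3 \<le> length vs\<close>])
  define \<psi> where "\<psi> s t = (if s = p \<and> t = q then \<i> else if s = q \<and> t = p then - \<i> else 1)" for s t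
  have "T_gain E \<psi>" unfolding T_gain_def \<psi>_def using \<open>p \<noteq> q\<close> by (auto simp: inverse_eq_divide)
  have "T_gain E (\<lambda>_ _. 1)" unfolding T_gain_def by simp
  have "spectral_radius (gain_adj n E \<psi>) \<noteq> spectral_radius (gain_adj n E (\<lambda>_ _. 1))"
  proof
    assume "spectral_radius (gain_adj n E \<psi>) = spectral_radius (gain_adj n E (\<lambda>_ _. 1))"
    then obtain \<mu> u where u: "\<forall>i<n. u i \<noteq> 0"
      and switching: "\<forall>i j. E i j \<longrightarrow> \<psi> i j * u j = \<mu> * u i"
      using spectral_radius_eq_imp_switching[OF sg conn \<open>T_gain E \<psi>\<close> \<open>E p q\<close>] by blast
    have "u p \<noteq> 0" "u q \<noteq> 0" using u \<open>p < n\<close> \<open>q < n\<close> by auto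
    then have "\<mu>\<^sup>2 = 1"
      by (rule switching_factor_square[OF \<open>T_gain E \<psi>\<close> \<open>E p q\<close> \<open>E q p\<close> _ _ switching])
    have "\<forall>k. Suc k < length vs \<longrightarrow> E (vs ! k) (vs ! Suc k) \<and> \<psi> (vs ! k) (vs ! Suc k) = 1"
      using path distinct_cycle_edges(2)[OF \<open>distinct vs\<close> \<open>3 \<le> length vs\<close>]
      unfolding \<psi>_def p_def q_def by (auto simp: doubleton_eq_iff)
    then have "\<psi> p q * u q = \<mu> ^ length vs * u q"
      unfolding p_def q_def by (rule cycle_gain_switching[OF _ closing \<open>vs \<noteq> []\<close> switching])
    then have "\<i> * u q = \<mu> ^ length vs * u q" unfolding \<psi>_def by simp
    then have "\<i> = \<mu> ^ length vs" using \<open>u q \<noteq> 0\<close> by simp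
    moreover have "\<mu> ^ length vs = 1 \<or> \<mu> ^ length vs = - 1"
      using \<open>\<mu>\<^sup>2 = 1\<close> by (cases "even (length vs)") (auto simp: power2_eq_1_iff)
    ultimately show False by (auto simp: complex_eq_iff)
  qed
  then show ?thesis using \<open>T_gain E \<psi>\<close> \<open>T_gain E (\<lambda>_ _. 1)\<close> by blast
qed

theorem theorem3p4:
  fixes n :: nat and E :: "nat \<Rightarrow> nat \<Rightarrow> bool"
  assumes "simple_graph n E" and "graph_connected n E"
  shows "(is_tree n E \<longleftrightarrow>
            (\<forall>\<phi> \<psi>. T_gain E \<phi> \<and> T_gain E \<psi> \<longrightarrow> cospectral (gain_adj n E \<phi>) (gain_adj n E \<psi>)))
       \<and> (is_tree n E \<longleftrightarrow>
            (\<forall>\<phi> \<psi>. T_gain E \<phi> \<and> T_gain E \<psi> \<longrightarrow>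
               spectral_radius (gain_adj n E \<phi>) = spectral_radius (gain_adj n E \<psi>)))"
proof -
  have tree_imp_cospectral: "cospectral (gain_adj n E \<phi>) (gain_adj n E \<psi>)"
    if "is_tree n E" "T_gain E \<phi>" "T_gain E \<psi>" for \<phi> \<psi>
    using acyclic_gain_adj_similar[OF assms(1)] similar_mat_imp_cospectral that
    unfolding is_tree_def by blast
  have cospectral_imp_radius: "spectral_radius (gain_adj n E \<phi>) = spectral_radius (gain_adj n E \<psi>)"
    if "cospectral (gain_adj n E \<phi>) (gain_adj n E \<psi>)" for \<phi> \<psi>
    using cospectral_imp_spectral_radius_eq[OF gain_adj_carrier gain_adj_carrier that] .
  have radius_imp_tree: "is_tree n E"
    if "\<forall>\<phi> \<psi>. T_gain E \<phi> \<and> T_gain E \<psi> \<longrightarrow>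
          spectral_radius (gain_adj n E \<phi>) = spectral_radius (gain_adj n E \<psi>)"
    using that has_cycle_imp_spectral_radius_differs[OF assms] assms(2)
    unfolding is_tree_def by blast
  show ?thesis using tree_imp_cospectral cospectral_imp_radius radius_imp_tree by blast
qed

end
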